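(* Let $h\in\mathcal F(X)$. Then $h\diamond(f+g)=h\diamond f+h\diamond g$ holds for all $f,g\in\mathcal F(X)$ if and only if $h$ is skew convex.
   Context: Let $K$ be a skew field, $K^*=K\setminus\{0\}$, and let $X$ be a nonempty set on which $K^*$ acts on the left, written $(a,x)\mapsto{}^{a}x$. $\mathcal F(X)$ is the set of all functions $X\to K$ with pointwise addition; the constant function with value $a\in K$ is denoted $a$. The skew product of $f,g\in\mathcal F(X)$ is $(f\diamond g)(x)=f({}^{g(x)}x)\,g(x)$ if $g(x)\neq0$ and $0$ if $g(x)=0$. A function $f\in\mathcal F(X)$ is skew convex if $f\diamond(a+b)=f\diamond a+f\diamond b$ for all $a,b\in K$ (viewed as constant functions). *)

theory Defs
  imports Main
begin

definition left_action :: "('k::division_ring \<Rightarrow> 'x \<Rightarrow> 'x) \<Rightarrow> bool" where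
  "left_action act \<longleftrightarrow> (\<forall>x. act 1 x = x) \<and>
     (\<forall>a b x. a \<noteq> 0 \<longrightarrow> b \<noteq> 0 \<longrightarrow> act (a * b) x = act a (act b x))"

definition skew_prod ::
  "('k::division_ring \<Rightarrow> 'x \<Rightarrow> 'x) \<Rightarrow> ('x \<Rightarrow> 'k) \<Rightarrow> ('x \<Rightarrow> 'k) \<Rightarrow> 'x \<Rightarrow> 'k" where
  "skew_prod act f g = (\<lambda>x. if g x = 0 then 0 else f (act (g x) x) * g x)"

definition skew_convex :: "('k::division_ring \<Rightarrow> 'x \<Rightarrow> 'x) \<Rightarrow> ('x \<Rightarrow> 'k) \<Rightarrow> bool" where
  "skew_convex act f \<longleftrightarrow> (\<forall>a b. skew_prod act f (\<lambda>_. a + b) =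
       (\<lambda>x. skew_prod act f (\<lambda>_. a) x + skew_prod act f (\<lambda>_. b) x))"

end

theory Submission
  imports Defs
begin

text \<open>The value of h \<diamond> f at x depends only on f x, so additivity in the right argument
  reduces to additivity against constant functions.\<close>

lemma skew_prod_eq_const_at:
  "skew_prod act h f x = skew_prod act h (\<lambda>_. f x) x"
  by (simp add: skew_prod_def)

lemma skew_convexD:
  assumes "skew_convex act h"
  shows "skew_prod act h (\<lambda>_. a + b) x =
           skew_prod act h (\<lambda>_. a) x + skew_prod act h (\<lambda>_. b) x"
  using assms unfolding skew_convex_def by simp

lemma skew_prod_add_right:
  assumes "skew_convex act h"
  shows "skew_prod act h (\<lambda>x. f x + g x) = (\<lambda>x. skew_prod act h f x + skew_prod act h g x)"
proof
  fix x
  have "skew_prod act h (\<lambda>x. f x + g x) x = skew_prod act h (\<lambda>_. f x + g x) x"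
    by (rule skew_prod_eq_const_at)
  also have "\<dots> = skew_prod act h (\<lambda>_. f x) x + skew_prod act h (\<lambda>_. g x) x"
    using assms by (rule skew_convexD)
  also have "\<dots> = skew_prod act h f x + skew_prod act h g x"
    by (simp only: skew_prod_eq_const_at[symmetric])
  finally show "skew_prod act h (\<lambda>x. f x + g x) x = skew_prod act h f x + skew_prod act h g x" .
qed

theorem lemma2p3:
  fixes act :: "'k::division_ring \<Rightarrow> 'x \<Rightarrow> 'x" and h :: "'x \<Rightarrow> 'k"
  assumes "left_action act"
  shows "(\<forall>f g. skew_prod act h (\<lambda>x. f x + g x) =
            (\<lambda>x. skew_prod act h f x + skew_prod act h g x))
         \<longleftrightarrow> skew_convex act h"
proof
  assume "\<forall>f g. skew_prod act h (\<lambda>x. f x + g x) =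
            (\<lambda>x. skew_prod act h f x + skew_prod act h g x)"
  then show "skew_convex act h"
    unfolding skew_convex_def by simp
qed (simp add: skew_prod_add_right)
end
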